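(* Let $S_{\text{thirds}}=(1,\mathbb{R}^{+},\{-\tfrac13,0,\tfrac13\},f_{\text{add}},\{\bot\}\cup\mathbb{Z}^{+},h_{\text{sqz}},x_0=0)$ and $\widehat{S}_{\text{binary}}=(1,\mathbb{R}^{+},\{\pm\tfrac{1}{2^p}\mid p\in\mathbb{Z}\},f_{\text{add}},\{\bot\}\cup\mathbb{Z}^{+},h_{\text{sqz}},\widehat{x}_0=0)$, where $f_{\text{add}}(x,u)=x+u$ and $$h_{\text{sqz}}(x)=\begin{cases} q & \text{if there is } q\in\mathbb{Z}^{+} \text{ with } -\frac{1}{4\cdot 2^q}\le x-\frac{q}{3}\le\frac{1}{4\cdot 2^q},\\ \bot & \text{otherwise.}\end{cases}$$ Then $\widehat{S}_{\text{binary}}$ is a $1$-illusion of $S_{\text{thirds}}$.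
   Context: A deterministic multi-robot transition system is a 7-tuple $(n,X,U,f,Y,h,x_0)$: $n$ robots, product state space $X$, product action space $U$, transition function $f:X\times U\to X$ (componentwise per robot), product observation space $Y$, observation function $h:X\to Y$ (componentwise per robot, $h^{(i)}$), initial state $x_0$; it evolves by $x_{k+1}=f(x_k,u_k)$, $y_k=h(x_k)$. Here both systems have a single robot. When a primary system $\widehat{S}$ (hatted quantities) emulates a secondary system $S$, a robot policy $\widehat{\pi}^{(i)}$ for robot $i$ of $\widehat{S}$ maps its own action history $\widehat{u}^{(i)}_0,\dots,\widehat{u}^{(i)}_k$, its observation history $\widehat{y}^{(i)}_0,\dots,\widehat{y}^{(i)}_k$, and the state history $x_0,\dots,x_\ell$ of the secondary system (with $\ell$ possibly different from $k$) to an action $\widehat{u}^{(i)}_k$. Robot policies in $S$ choose actions from histories in the same manner. $\widehat{S}$ is an $m$-illusion of $S$ (with $0<m\le n$) if there exist (i) robot policies $\widehat{\pi}^{(1)},\dots,\widehat{\pi}^{(\widehat{n})}$ in $\widehat{S}$, (ii) a strictly increasing function $z:\mathbb{Z}^+\to\mathbb{Z}^+$, and (iii) functions $\rho_k:\{1,\dots,m\}\to\{1,\dots,\widehat{n}\}$, such that for any robot policies $\pi^{(1)},\dots,\pi^{(n)}$ in $S$, for all $k\ge0$ and $1\le i\le m$, $h^{(i)}(x_k)=\widehat{h}^{(\rho_k(i))}(\widehat{x}_{z(k)})$, where $x$ and $\widehat{x}$ are the state trajectories of $S$ and $\widehat{S}$. *)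

theory Defs
  imports Main Complex_Main
begin

(* Single-robot systems. States and actions are reals, observations are
   "nat option": None stands for \<bottom>, Some q for q \<in> Z^+ (q \<ge> 1). *)

definition U_thirds :: "real set" where
  "U_thirds = {-1/3, 0, 1/3}"

definition U_binary :: "real set" where
  "U_binary = {u. \<exists>p::int. u = 1 / 2 powi p \<or> u = - (1 / 2 powi p)}"

definition f_add :: "real \<Rightarrow> real \<Rightarrow> real" where
  "f_add x u = x + u"

definition sqz_window :: "real \<Rightarrow> nat \<Rightarrow> bool" where
  "sqz_window x q \<longleftrightarrow> q \<ge> 1 \<and> - (1 / (4 * 2 ^ q)) \<le> x - real q / 3 \<and> x - real q / 3 \<le> 1 / (4 * 2 ^ q)"

definition h_sqz :: "real \<Rightarrow> nat option" where
  "h_sqz x = (if \<exists>q. sqz_window x q then Some (THE q. sqz_window x q) else None)"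

fun sec_run :: "(real list \<Rightarrow> nat option list \<Rightarrow> real) \<Rightarrow> nat
                 \<Rightarrow> real \<times> real list \<times> nat option list" where
  "sec_run \<pi> 0 = (0, [], [h_sqz 0])"
| "sec_run \<pi> (Suc k) =
     (case sec_run \<pi> k of (x, us, ys) \<Rightarrow>
        let u = \<pi> us ys; x' = f_add x u in (x', us @ [u], ys @ [h_sqz x']))"

definition sec_state :: "(real list \<Rightarrow> nat option list \<Rightarrow> real) \<Rightarrow> nat \<Rightarrow> real" where
  "sec_state \<pi> k = fst (sec_run \<pi> k)"

(* Admissible robot policy of S_thirds: actions in U, trajectory stays in X = R^+ = [0,\<infinity>). *)
definition sec_admissible :: "(real list \<Rightarrow> nat option list \<Rightarrow> real) \<Rightarrow> bool" where
  "sec_admissible \<pi> \<longleftrightarrow> (\<forall>us ys. \<pi> us ys \<in> U_thirds) \<and> (\<forall>k. sec_state \<pi> k \<ge> 0)"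

fun prim_run :: "(real list \<Rightarrow> nat option list \<Rightarrow> real list \<Rightarrow> real) \<Rightarrow> (nat \<Rightarrow> real)
                  \<Rightarrow> (nat \<Rightarrow> nat) \<Rightarrow> nat \<Rightarrow> real \<times> real list \<times> nat option list" where
  "prim_run \<pi>h xs ell 0 = (0, [], [h_sqz 0])"
| "prim_run \<pi>h xs ell (Suc j) =
     (case prim_run \<pi>h xs ell j of (x, us, ys) \<Rightarrow>
        let u = \<pi>h us ys (map xs [0..<Suc (ell j)]); x' = f_add x u
        in (x', us @ [u], ys @ [h_sqz x']))"

definition prim_state :: "(real list \<Rightarrow> nat option list \<Rightarrow> real list \<Rightarrow> real) \<Rightarrow> (nat \<Rightarrow> real)
                  \<Rightarrow> (nat \<Rightarrow> nat) \<Rightarrow> nat \<Rightarrow> real" where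
  "prim_state \<pi>h xs ell j = fst (prim_run \<pi>h xs ell j)"

(* At primary step j, the primary knows the secondary states up to the next
   secondary step it has to match: ell j = least l with j < z l. *)
definition lookahead :: "(nat \<Rightarrow> nat) \<Rightarrow> nat \<Rightarrow> nat" where
  "lookahead z j = (LEAST l. j < z l)"

end

theory Submission
  imports Defs
begin

text \<open>At time z(l) = 2^(l+4) - 16 the primary robot sits exactly at the secondary state x_l
rounded down to the grid of spacing 2^-(l+2). During the next 2^(l+4) steps it moves by
+-2^-(l+4), always towards the next grid target x_(l+1) rounded down to spacing 2^-(l+3). Both
targets lie on the grid of step 2^-(l+4) at an even offset, and they differ by less than 1 (the
secondary moves by at most 1/3), so the zigzag reaches the new target exactly at the end of
the block, never dropping below the smaller of the two targets, which are nonnegative. Finally,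
x_l = q/3 with q \<le> l, and rounding down by less than 2^-(l+2) \<le> 1/(4 * 2^q) stays inside
the observation window of q.\<close>

definition grid_floor :: "real \<Rightarrow> real \<Rightarrow> real" where
  "grid_floor \<delta> x = \<delta> * of_int \<lfloor>x / \<delta>\<rfloor>"

lemma grid_floor_le:
  assumes "\<delta> > 0" shows "grid_floor \<delta> x \<le> x"
proof -
  have "\<delta> * of_int \<lfloor>x / \<delta>\<rfloor> \<le> \<delta> * (x / \<delta>)"
    using assms by (intro mult_left_mono) auto
  then show ?thesis using assms by (simp add: grid_floor_def)
qed

lemma grid_floor_gt:
  assumes "\<delta> > 0" shows "x - \<delta> < grid_floor \<delta> x"
proof -
  have "\<delta> * (x / \<delta>) < \<delta> * (of_int \<lfloor>x / \<delta>\<rfloor> + 1)"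
    using assms by (intro mult_strict_left_mono) auto
  then show ?thesis using assms by (simp add: grid_floor_def algebra_simps)
qed

lemma grid_floor_nonneg: "\<delta> > 0 \<Longrightarrow> 0 \<le> x \<Longrightarrow> 0 \<le> grid_floor \<delta> x"
  by (simp add: grid_floor_def)

lemma grid_floor_0 [simp]: "grid_floor \<delta> 0 = 0"
  by (simp add: grid_floor_def)

lemma zigzag_walk:
  fixes p :: "nat \<Rightarrow> real"
  assumes "\<And>i. i < n \<Longrightarrow> p (Suc i) = p i + (if p i \<le> t then s else - s)"
    and "s > 0" and "p 0 = t + s * of_int w" and "\<bar>w\<bar> \<le> int n" and "even (int n + w)"
  shows "p n = t \<and> (\<forall>i \<le> n. min (p 0) t \<le> p i)"
  using assms
proof (induction n arbitrary: p w)
  case 0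
  then show ?case by simp
next
  case (Suc n)
  define w' where "w' = (if w \<le> 0 then w + 1 else w - 1)"
  have p1: "p 1 = t + s * of_int w'"
    using Suc.prems(1)[of 0] Suc.prems(2,3) by (auto simp: w'_def mult_le_0_iff algebra_simps)
  moreover have "\<bar>w'\<bar> \<le> int n" "even (int n + w')"
    using Suc.prems(4,5) unfolding w'_def by presburger+
  ultimately have IH: "p (Suc n) = t \<and> (\<forall>i \<le> n. min (p 1) t \<le> p (Suc i))"
    using Suc.IH[of "\<lambda>i. p (Suc i)" w'] Suc.prems(1,2) by simp
  have "min (p 0) t \<le> min (p 1) t"
  proof (cases "w \<le> 0")
    case True
    then have "p 0 \<le> t" using Suc.prems(2,3) by (simp add: mult_nonneg_nonpos)
    moreover have "p 1 = p 0 + s" using True p1 Suc.prems(3) by (simp add: w'_def algebra_simps)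
    ultimately show ?thesis using Suc.prems(2) by simp
  next
    case False
    then have "0 \<le> s * of_int w'" using Suc.prems(2) by (simp add: w'_def)
    then show ?thesis using p1 by simp
  qed
  then have "min (p 0) t \<le> p i" if "i \<le> Suc n" for i
    using IH that by (cases i) force+
  with IH show ?case by blast
qed

lemma sqz_window_radius_le:
  assumes "sqz_window x q" shows "1 / (4 * 2 ^ q) \<le> (1 / 8 :: real)"
proof -
  have "(2::real) ^ 1 \<le> 2 ^ q"
    using assms by (intro power_increasing) (auto simp: sqz_window_def)
  then show ?thesis by (simp add: field_simps)
qed

lemma sqz_window_unique:
  assumes "sqz_window x q" and "sqz_window x q'" shows "q = q'"
proof (rule ccontr)
  assume "q \<noteq> q'"
  then have "1 / 3 \<le> \<bar>real q / 3 - real q' / 3\<bar>"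
    by (cases "q < q'") (auto simp: field_simps)
  then show False
    using assms sqz_window_radius_le[OF assms(1)] sqz_window_radius_le[OF assms(2)]
    unfolding sqz_window_def by linarith
qed

lemma h_sqz_eqI: "sqz_window x q \<Longrightarrow> h_sqz x = Some q"
  unfolding h_sqz_def using sqz_window_unique by (auto intro: the_equality)

definition binary_step :: "nat \<Rightarrow> real" where
  "binary_step l = 1 / 2 ^ (l + 3)"

definition binary_target :: "nat \<Rightarrow> real \<Rightarrow> real" where
  "binary_target l = grid_floor (2 * binary_step l)"

lemma binary_step_pos: "0 < binary_step l"
  by (simp add: binary_step_def)

lemma binary_step_Suc: "binary_step l = 2 * binary_step (Suc l)"
  by (simp add: binary_step_def field_simps power_add)

lemma binary_step_le: "binary_step l \<le> 1 / 8"
proof -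
  have "(2::real) ^ 3 \<le> 2 ^ (l + 3)" by (intro power_increasing) auto
  then show ?thesis by (simp add: binary_step_def field_simps)
qed

lemma binary_step_in_U_binary: "binary_step l \<in> U_binary" "- binary_step l \<in> U_binary"
proof -
  have "binary_step l = 1 / 2 powi int (l + 3)"
    by (simp only: power_int_of_nat binary_step_def)
  then show "binary_step l \<in> U_binary" "- binary_step l \<in> U_binary"
    unfolding U_binary_def by auto
qed

lemma binary_target_le: "binary_target l x \<le> x"
  and binary_target_gt: "x - 2 * binary_step l < binary_target l x"
  and binary_target_nonneg: "0 \<le> x \<Longrightarrow> 0 \<le> binary_target l x"
  using binary_step_pos[of l]
  by (simp_all add: binary_target_def grid_floor_le grid_floor_gt grid_floor_nonneg)

lemma binary_target_diff_even:
  "\<exists>w. binary_target l x - binary_target (Suc l) y = binary_step (Suc l) * of_int w \<and> even w"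
proof -
  define a where "a = \<lfloor>x / (4 * binary_step (Suc l))\<rfloor>"
  define b where "b = \<lfloor>y / (2 * binary_step (Suc l))\<rfloor>"
  have "binary_target l x - binary_target (Suc l) y = binary_step (Suc l) * of_int (4 * a - 2 * b)"
    by (simp add: binary_target_def grid_floor_def binary_step_Suc[of l] a_def b_def algebra_simps)
  then show ?thesis by (intro exI[of _ "4 * a - 2 * b"]) simp
qed

lemma h_sqz_binary_target:
  assumes "x = real q / 3" and "q \<le> l"
  shows "h_sqz (binary_target l x) = h_sqz x"
proof (cases "q = 0")
  case True
  then show ?thesis using assms by (simp add: binary_target_def)
next
  case False
  have "(2::real) ^ q \<le> 2 ^ l" using assms(2) by (intro power_increasing) auto
  then have "2 * binary_step l \<le> 1 / (4 * 2 ^ q)"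
    by (simp add: binary_step_def field_simps power_add)
  then have "sqz_window (binary_target l x) q" and "sqz_window x q"
    using False assms(1) binary_target_le[of l x] binary_target_gt[of x l]
    unfolding sqz_window_def by (intro conjI; simp; linarith)+
  then show ?thesis by (simp add: h_sqz_eqI)
qed

lemma thirds_step: "u \<in> U_thirds \<Longrightarrow> \<exists>d::int. u = of_int d / 3 \<and> \<bar>d\<bar> \<le> 1"
  unfolding U_thirds_def
  by (auto intro: exI[of _ "-1"] exI[of _ 0] exI[of _ 1])

lemma sec_state_0: "sec_state \<pi> 0 = 0"
  by (simp add: sec_state_def)

lemma sec_state_Suc_diff:
  assumes "\<forall>us ys. \<pi> us ys \<in> U" shows "sec_state \<pi> (Suc k) - sec_state \<pi> k \<in> U"
  using assms by (cases "sec_run \<pi> k") (simp add: sec_state_def f_add_def Let_def)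

lemma sec_state_thirds:
  assumes "sec_admissible \<pi>" shows "\<exists>q. sec_state \<pi> k = real q / 3 \<and> q \<le> k"
proof -
  have U: "\<forall>us ys. \<pi> us ys \<in> U_thirds" using assms by (simp add: sec_admissible_def)
  have "\<exists>n::int. sec_state \<pi> k = of_int n / 3 \<and> n \<le> int k"
  proof (induction k)
    case 0
    then show ?case by (intro exI[of _ 0]) (simp add: sec_state_0)
  next
    case (Suc k)
    then obtain n where n: "sec_state \<pi> k = of_int n / 3" "n \<le> int k" by blast
    obtain d where d: "sec_state \<pi> (Suc k) - sec_state \<pi> k = of_int d / 3" "\<bar>d\<bar> \<le> 1"
      using thirds_step[OF sec_state_Suc_diff[OF U]] by blast
    show ?case
      using n d by (intro exI[of _ "n + d"]) (auto simp: field_simps)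
  qed
  then obtain n where n: "sec_state \<pi> k = of_int n / 3" "n \<le> int k" by blast
  moreover have "0 \<le> n"
  proof -
    have "0 \<le> sec_state \<pi> k" using assms by (simp add: sec_admissible_def)
    with n(1) show ?thesis by simp
  qed
  ultimately show ?thesis by (intro exI[of _ "nat n"]) auto
qed

lemma prim_state_0: "prim_state \<pi>h xs ell 0 = 0"
  by (simp add: prim_state_def)

lemma prim_state_Suc_of_position_policy:
  assumes "\<And>us ys xs'. \<pi>h us ys xs' = g (sum_list us) xs'"
  shows "prim_state \<pi>h xs ell (Suc j) =
    prim_state \<pi>h xs ell j + g (prim_state \<pi>h xs ell j) (map xs [0..<Suc (ell j)])"
proof -
  have position: "fst (prim_run \<pi>h xs ell j) = sum_list (fst (snd (prim_run \<pi>h xs ell j)))" for j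
    by (induction j) (auto simp: f_add_def Let_def split: prod.splits)
  obtain x us ys where "prim_run \<pi>h xs ell j = (x, us, ys)" by (cases "prim_run \<pi>h xs ell j")
  with position[of j] show ?thesis by (simp add: assms prim_state_def f_add_def Let_def)
qed

definition schedule :: "nat \<Rightarrow> nat" where
  "schedule l = 2 ^ (l + 4) - 16"

lemma schedule_Suc: "schedule (Suc l) = schedule l + 2 ^ (l + 4)"
proof -
  have "(16::nat) \<le> 2 ^ (l + 4)" using power_increasing[of 4 "l + 4" "2::nat"] by simp
  moreover have "(2::nat) ^ (Suc l + 4) = 2 ^ (l + 4) + 2 ^ (l + 4)"
    by (simp only: add_Suc power_Suc mult_2)
  ultimately show ?thesis unfolding schedule_def by linarith
qed

lemma strict_mono_schedule: "strict_mono schedule"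
  unfolding strict_mono_Suc_iff by (simp add: schedule_Suc)

lemma lookahead_eqI:
  assumes "strict_mono z" and "z l \<le> j" and "j < z (Suc l)"
  shows "lookahead z j = Suc l"
  unfolding lookahead_def
proof (rule Least_equality)
  show "j < z (Suc l)" by (fact assms(3))
  show "Suc l \<le> m" if "j < z m" for m
  proof (rule ccontr)
    assume "\<not> Suc l \<le> m"
    then have "z m \<le> z l" using strict_mono_leD[OF assms(1)] by simp
    with assms(2) that show False by simp
  qed
qed

text \<open>The primary robot starts at 0 and moves by its actions, so its position is the sum of its
action history; the last entry of xs is the secondary state it currently aims at.\<close>

definition zigzag_policy :: "real list \<Rightarrow> nat option list \<Rightarrow> real list \<Rightarrow> real" where
  "zigzag_policy us ys xs =
     (let l = length xs - 1
      in if sum_list us \<le> binary_target l (last xs) then binary_step l else - binary_step l)"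

lemma zigzag_policy_in_U_binary: "zigzag_policy us ys xs \<in> U_binary"
  by (simp add: zigzag_policy_def Let_def binary_step_in_U_binary)

definition zigzag_run :: "(nat \<Rightarrow> real) \<Rightarrow> nat \<Rightarrow> real" where
  "zigzag_run X = prim_state zigzag_policy X (lookahead schedule)"

lemma zigzag_run_0: "zigzag_run X 0 = 0"
  by (simp add: zigzag_run_def prim_state_0)

lemma zigzag_run_Suc:
  assumes "lookahead schedule j = l"
  shows "zigzag_run X (Suc j) = zigzag_run X j +
    (if zigzag_run X j \<le> binary_target l (X l) then binary_step l else - binary_step l)"
  using prim_state_Suc_of_position_policy[of zigzag_policy
      "\<lambda>pos xs. let l = length xs - 1
                 in if pos \<le> binary_target l (last xs) then binary_step l else - binary_step l"]
    assms
  by (simp add: zigzag_run_def zigzag_policy_def)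

lemma zigzag_run_block:
  assumes start: "zigzag_run X (schedule l) = binary_target l (X l)"
    and X_step: "\<bar>X (Suc l) - X l\<bar> \<le> 1 / 2"
  shows "zigzag_run X (schedule (Suc l)) = binary_target (Suc l) (X (Suc l))"
    and "\<forall>i \<le> 2 ^ (l + 4). min (binary_target l (X l)) (binary_target (Suc l) (X (Suc l)))
           \<le> zigzag_run X (schedule l + i)"
proof -
  define L :: nat where "L = 2 ^ (l + 4)"
  define s where "s = binary_step (Suc l)"
  define t where "t = binary_target (Suc l) (X (Suc l))"
  obtain w where w: "binary_target l (X l) - t = s * of_int w" "even w"
    using binary_target_diff_even unfolding s_def t_def by blast
  have walk: "zigzag_run X (schedule l + Suc i) =
      zigzag_run X (schedule l + i) + (if zigzag_run X (schedule l + i) \<le> t then s else - s)"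
    if "i < L" for i
  proof -
    have "lookahead schedule (schedule l + i) = Suc l"
      using that by (intro lookahead_eqI strict_mono_schedule) (auto simp: schedule_Suc L_def)
    then show ?thesis using zigzag_run_Suc unfolding s_def t_def by simp
  qed
  have "\<bar>binary_target l (X l) - t\<bar> < 1"
    using binary_target_le[of l "X l"] binary_target_gt[of "X l" l] binary_step_le[of l]
      binary_target_le[of "Suc l" "X (Suc l)"] binary_target_gt[of "X (Suc l)" "Suc l"]
      binary_step_le[of "Suc l"] X_step
    unfolding t_def by linarith
  moreover have "s * real L = 1" by (simp add: s_def L_def binary_step_def)
  ultimately have "s * \<bar>of_int w\<bar> < s * real L"
    using w(1) binary_step_pos[of "Suc l"] by (simp add: s_def abs_mult)
  then have "\<bar>w\<bar> \<le> int L" using binary_step_pos[of "Suc l"] unfolding s_def by simp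
  moreover have "even (int L + w)" using w(2) by (simp add: L_def)
  ultimately have "zigzag_run X (schedule l + L) = t \<and>
      (\<forall>i \<le> L. min (zigzag_run X (schedule l + 0)) t \<le> zigzag_run X (schedule l + i))"
    using zigzag_walk[of L "\<lambda>i. zigzag_run X (schedule l + i)" t s w] walk w(1) start
      binary_step_pos[of "Suc l"]
    by (simp add: s_def algebra_simps)
  then show "zigzag_run X (schedule (Suc l)) = binary_target (Suc l) (X (Suc l))"
    and "\<forall>i \<le> 2 ^ (l + 4). min (binary_target l (X l)) (binary_target (Suc l) (X (Suc l)))
           \<le> zigzag_run X (schedule l + i)"
    using start by (simp_all add: schedule_Suc L_def t_def)
qed

lemma zigzag_run_schedule:
  assumes "X 0 = 0" and "\<And>k. 0 \<le> X k" and "\<And>k. \<bar>X (Suc k) - X k\<bar> \<le> 1 / 2"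
  shows "zigzag_run X (schedule l) = binary_target l (X l) \<and> (\<forall>j \<le> schedule l. 0 \<le> zigzag_run X j)"
proof (induction l)
  case 0
  then show ?case using assms(1) by (simp add: schedule_def zigzag_run_0 binary_target_def)
next
  case (Suc l)
  then have start: "zigzag_run X (schedule l) = binary_target l (X l)" by blast
  note block = zigzag_run_block[OF start assms(3)]
  have "0 \<le> zigzag_run X j" if j: "j \<le> schedule (Suc l)" for j
  proof (cases "j \<le> schedule l")
    case True
    then show ?thesis using Suc.IH by blast
  next
    case False
    define i where "i = j - schedule l"
    have "j = schedule l + i" "i \<le> 2 ^ (l + 4)" using j False by (auto simp: i_def schedule_Suc)
    then have "min (binary_target l (X l)) (binary_target (Suc l) (X (Suc l))) \<le> zigzag_run X j"
      using block(2) by blast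
    then show ?thesis
      using binary_target_nonneg[OF assms(2), of l l] binary_target_nonneg[OF assms(2), of "Suc l" "Suc l"]
      by linarith
  qed
  with block(1) show ?case by blast
qed

theorem lemma1:
  shows "\<exists>(\<pi>h :: real list \<Rightarrow> nat option list \<Rightarrow> real list \<Rightarrow> real) (z :: nat \<Rightarrow> nat).
           (\<forall>us ys xs. \<pi>h us ys xs \<in> U_binary) \<and> strict_mono z \<and>
           (\<forall>\<pi>. sec_admissible \<pi> \<longrightarrow>
              (\<forall>j. prim_state \<pi>h (sec_state \<pi>) (lookahead z) j \<ge> 0) \<and>
              (\<forall>k. h_sqz (sec_state \<pi> k) =
                    h_sqz (prim_state \<pi>h (sec_state \<pi>) (lookahead z) (z k))))"
proof (intro exI conjI allI impI)
  show "zigzag_policy us ys xs \<in> U_binary" for us ys xs by (fact zigzag_policy_in_U_binary)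
  show "strict_mono schedule" by (fact strict_mono_schedule)
  fix \<pi> assume adm: "sec_admissible \<pi>"
  have "\<bar>sec_state \<pi> (Suc k) - sec_state \<pi> k\<bar> \<le> 1 / 2" for k
    using sec_state_Suc_diff[of \<pi> U_thirds k] adm by (auto simp: sec_admissible_def U_thirds_def)
  then have tracks: "zigzag_run (sec_state \<pi>) (schedule l) = binary_target l (sec_state \<pi> l) \<and>
      (\<forall>j \<le> schedule l. 0 \<le> zigzag_run (sec_state \<pi>) j)" for l
    using adm by (intro zigzag_run_schedule) (auto simp: sec_state_0 sec_admissible_def)
  show "0 \<le> prim_state zigzag_policy (sec_state \<pi>) (lookahead schedule) j" for j
    using tracks[of j] strict_mono_imp_increasing[OF strict_mono_schedule, of j]
    by (simp add: zigzag_run_def)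
  show "h_sqz (sec_state \<pi> k) =
      h_sqz (prim_state zigzag_policy (sec_state \<pi>) (lookahead schedule) (schedule k))" for k
  proof -
    obtain q where "sec_state \<pi> k = real q / 3" "q \<le> k" using sec_state_thirds[OF adm] by blast
    then show ?thesis using tracks[of k] h_sqz_binary_target by (simp add: zigzag_run_def)
  qed
qed

end
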